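(* Let $\mathbb{F}$ be a field and $0\neq h\in\mathbb{F}[x]$, and let $A=A_h$ be the unital $\mathbb{F}$-algebra generated by $x,\hat y$ with $\hat yx-x\hat y=h$. Then $[\mathbb{F}[x],A]=[x,A]$.
   Context: For subsets $S,T$ of $A$, $[S,T]$ denotes the $\mathbb{F}$-linear span of all commutators $[s,t]=st-ts$ with $s\in S,t\in T$; $[x,A]=\{[x,a]:a\in A\}$. *)

theory Defs
  imports "HOL-Computational_Algebra.Polynomial"
begin

text \<open>The algebra A_h = F<x, y> / (y x - x y = h) is realised concretely as the
Ore extension F[x][y; delta] with delta f = h * f'.  An element is a polynomial in y
with coefficients in F[x], written with coefficients on the left:
  p = sum_j (coeff p j) * y^j.  This is the standard PBW normal form (basis x^i y^j).\<close>

definition ore_delta :: "'a::field poly \<Rightarrow> 'a poly \<Rightarrow> 'a poly" where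
  "ore_delta h f = h * pderiv f"

text \<open>Left multiplication by y:  y * (g_k y^k) = (g_k y + delta g_k) y^k.\<close>
definition ore_Ly :: "'a::field poly \<Rightarrow> 'a poly poly \<Rightarrow> 'a poly poly" where
  "ore_Ly h g = pCons 0 g + map_poly (ore_delta h) g"

definition ore_mult :: "'a::field poly \<Rightarrow> 'a poly poly \<Rightarrow> 'a poly poly \<Rightarrow> 'a poly poly" where
  "ore_mult h p g = (\<Sum>j\<le>degree p. smult (coeff p j) ((ore_Ly h ^^ j) g))"

definition ore_comm :: "'a::field poly \<Rightarrow> 'a poly poly \<Rightarrow> 'a poly poly \<Rightarrow> 'a poly poly" where
  "ore_comm h a b = ore_mult h a b - ore_mult h b a"

definition ore_x :: "'a::field poly poly" where
  "ore_x = [:[:0, 1:]:]"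

definition ore_of_poly :: "'a::field poly \<Rightarrow> 'a poly poly" where
  "ore_of_poly f = [:f:]"

definition F_span :: "'a::field poly poly set \<Rightarrow> 'a poly poly set" where
  "F_span S = {(\<Sum>i<n. smult [:c i:] (s i)) | n (c :: nat \<Rightarrow> 'a) s. \<forall>i<n. s i \<in> S}"

end

theory Submission
  imports Defs
begin

text \<open>Every f \<in> F[x] commutes with x, so for f = c + x g the Leibniz rule gives
  [x g, a] = x [g, a] + [x, a] g = [x, x b] + [x, a g]
whenever [g, a] = [x, b].  By induction on the degree of f, every [f, a] is a commutator
[x, b'], and [x, -] is F-linear, so [x, A] is already closed under linear combinations.\<close>

lemma ore_delta_0 [simp]: "ore_delta h 0 = 0"
  by (simp add: ore_delta_def)

lemma coeff_ore_Ly: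
  "coeff (ore_Ly h g) n = (if n = 0 then 0 else coeff g (n - 1)) + ore_delta h (coeff g n)"
  by (simp add: ore_Ly_def coeff_pCons coeff_map_poly split: nat.split)

lemma ore_Ly_0 [simp]: "ore_Ly h 0 = 0"
  by (rule poly_eqI) (simp add: coeff_ore_Ly)

lemma ore_Ly_add: "ore_Ly h (a + b) = ore_Ly h a + ore_Ly h b"
  by (rule poly_eqI) (simp add: coeff_ore_Ly ore_delta_def algebra_simps pderiv_add)

lemma ore_Ly_smult: "ore_Ly h (smult c g) = smult c (ore_Ly h g) + smult (ore_delta h c) g"
  by (rule poly_eqI) (simp add: coeff_ore_Ly ore_delta_def algebra_simps pderiv_mult)

lemma ore_Ly_smult_const: "ore_Ly h (smult [:c:] g) = smult [:c:] (ore_Ly h g)"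
  by (simp add: ore_Ly_smult ore_delta_def)

lemma ore_Ly_pCons_0: "ore_Ly h (pCons 0 g) = pCons 0 (ore_Ly h g)"
  by (rule poly_eqI) (simp add: coeff_ore_Ly coeff_pCons split: nat.split)

lemma ore_Ly_pCons:
  "ore_Ly h (pCons c r) = pCons (ore_delta h c) ([:c:] + ore_Ly h r)"
  by (rule poly_eqI) (simp add: coeff_ore_Ly coeff_pCons split: nat.split)

lemma ore_Ly_1: "ore_Ly h 1 = pCons 0 1"
  by (rule poly_eqI) (simp add: coeff_ore_Ly coeff_pCons ore_delta_def coeff_1 split: nat.split)

lemma ore_mult_pCons: "ore_mult h (pCons c r) g = smult c g + ore_mult h r (ore_Ly h g)"
proof -
  have "ore_mult h (pCons c r) g
      = (\<Sum>j\<le>Suc (degree r). smult (coeff (pCons c r) j) ((ore_Ly h ^^ j) g))"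
    unfolding ore_mult_def
    by (rule sum.mono_neutral_left) (auto simp: coeff_eq_0 intro: le_trans[OF degree_pCons_le])
  also have "\<dots> = smult c g + (\<Sum>j\<le>degree r. smult (coeff r j) ((ore_Ly h ^^ j) (ore_Ly h g)))"
    by (subst sum.atMost_Suc_shift) (simp add: funpow_Suc_right del: funpow.simps)
  finally show ?thesis
    by (simp add: ore_mult_def)
qed

lemma ore_mult_0_left [simp]: "ore_mult h 0 g = 0"
  by (simp add: ore_mult_def)

lemma ore_mult_0_right [simp]: "ore_mult h p 0 = 0"
  by (induct p rule: pCons_induct) (simp_all add: ore_mult_pCons)

lemma ore_mult_const_left: "ore_mult h [:c:] g = smult c g"
  by (simp add: ore_mult_pCons)

lemma ore_mult_add_right: "ore_mult h p (a + b) = ore_mult h p a + ore_mult h p b"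
  by (induct p arbitrary: a b rule: pCons_induct)
     (simp_all add: ore_mult_pCons ore_Ly_add smult_add_right)

lemma ore_mult_add_left: "ore_mult h (p + q) g = ore_mult h p g + ore_mult h q g"
proof (induct p arbitrary: q g rule: pCons_induct)
  case (pCons c r)
  show ?case
  proof (cases q)
    case (pCons d s)
    then show ?thesis
      using pCons.hyps(2)[of s "ore_Ly h g"]
      by (simp add: ore_mult_pCons smult_add_left algebra_simps)
  qed
qed simp

lemma ore_mult_diff_right: "ore_mult h p (a - b) = ore_mult h p a - ore_mult h p b"
  by (metis ore_mult_add_right diff_add_cancel eq_diff_eq)

lemma ore_mult_diff_left: "ore_mult h (p - q) g = ore_mult h p g - ore_mult h q g"
  by (metis ore_mult_add_left diff_add_cancel eq_diff_eq)

lemma ore_mult_smult_left: "ore_mult h (smult k p) g = smult k (ore_mult h p g)"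
  by (induct p arbitrary: g rule: pCons_induct) (simp_all add: ore_mult_pCons smult_add_right)

lemma ore_mult_smult_const_right:
  "ore_mult h p (smult [:c:] g) = smult [:c:] (ore_mult h p g)"
  by (induct p arbitrary: g rule: pCons_induct)
     (simp_all add: ore_mult_pCons ore_Ly_smult_const smult_add_right mult.commute)

lemma ore_mult_pCons_0_right: "ore_mult h p (pCons 0 g) = pCons 0 (ore_mult h p g)"
  by (induct p arbitrary: g rule: pCons_induct) (simp_all add: ore_mult_pCons ore_Ly_pCons_0)

lemma ore_mult_1_right: "ore_mult h p 1 = p"
  by (induct p rule: pCons_induct) (simp_all add: ore_mult_pCons ore_Ly_1 ore_mult_pCons_0_right)

lemma ore_mult_const_right: "ore_mult h p [:[:c:]:] = smult [:c:] p"
  using ore_mult_smult_const_right[of h p c 1] by (simp add: ore_mult_1_right)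

lemma ore_Ly_ore_mult: "ore_Ly h (ore_mult h q g) = ore_mult h (ore_Ly h q) g"
  by (induct q arbitrary: g rule: pCons_induct)
     (simp_all add: ore_Ly_pCons ore_mult_pCons ore_Ly_add ore_Ly_smult ore_mult_add_left
       ore_mult_const_left algebra_simps)

lemma ore_mult_assoc: "ore_mult h (ore_mult h p q) g = ore_mult h p (ore_mult h q g)"
  by (induct p arbitrary: q g rule: pCons_induct)
     (simp_all add: ore_mult_pCons ore_mult_add_left ore_mult_smult_left ore_Ly_ore_mult)

lemma ore_of_poly_commute:
  "ore_mult h (ore_of_poly f) (ore_of_poly g) = ore_mult h (ore_of_poly g) (ore_of_poly f)"
  by (simp add: ore_of_poly_def ore_mult_const_left mult.commute)

lemma ore_x_eq_ore_of_poly: "ore_x = ore_of_poly [:0, 1:]"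
  by (simp add: ore_x_def ore_of_poly_def)

lemma ore_comm_add_left: "ore_comm h (u + v) a = ore_comm h u a + ore_comm h v a"
  by (simp add: ore_comm_def ore_mult_add_left ore_mult_add_right)

lemma ore_comm_add_right: "ore_comm h a (u + v) = ore_comm h a u + ore_comm h a v"
  by (simp add: ore_comm_def ore_mult_add_left ore_mult_add_right)

lemma ore_comm_of_poly_smult:
  "ore_comm h (ore_of_poly f) (smult k u) = smult k (ore_comm h (ore_of_poly f) u)"
  by (simp add: ore_comm_def ore_of_poly_def ore_mult_const_left ore_mult_smult_left
      smult_diff_right mult.commute)

lemma ore_comm_const_left: "ore_comm h [:[:c:]:] a = 0"
  by (simp add: ore_comm_def ore_mult_const_left ore_mult_const_right)

lemma ore_comm_of_poly_eq_comm_x: "\<exists>b. ore_comm h (ore_of_poly f) a = ore_comm h ore_x b"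
proof (induct f arbitrary: a rule: pCons_induct)
  case 0
  show ?case
    by (rule exI[of _ 0]) (simp add: ore_comm_def ore_of_poly_def)
next
  case (pCons c g)
  let ?M = "ore_mult h" and ?X = "ore_x :: 'a poly poly" and ?G = "ore_of_poly g"
  obtain b where b: "?M ?G a - ?M a ?G = ?M ?X b - ?M b ?X"
    using pCons.hyps(2)[of a] by (auto simp: ore_comm_def)
  have GX: "?M ?G ?X = ?M ?X ?G"
    by (simp add: ore_x_eq_ore_of_poly ore_of_poly_commute)
  have "ore_comm h (?M ?X ?G) a = ?M ?X (?M ?G a) - ?M (?M a ?X) ?G"
    by (simp add: ore_comm_def ore_mult_assoc GX)
  also have "\<dots> = ?M ?X (?M ?X b - ?M b ?X) + ?M (?M ?X a - ?M a ?X) ?G"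
    by (simp add: b[symmetric] ore_mult_diff_left ore_mult_diff_right ore_mult_assoc)
  also have "\<dots> = ore_comm h ?X (?M ?X b + ?M a ?G)"
    by (simp add: ore_comm_def ore_mult_add_left ore_mult_add_right ore_mult_diff_left
        ore_mult_diff_right ore_mult_assoc GX)
  finally have "ore_comm h (?M ?X ?G) a = ore_comm h ?X (?M ?X b + ?M a ?G)" .
  moreover have "ore_of_poly (pCons c g) = [:[:c:]:] + ?M ?X ?G"
    by (simp add: ore_of_poly_def ore_x_def ore_mult_const_left)
  ultimately show ?case
    by (auto simp: ore_comm_add_left ore_comm_const_left)
qed

lemma F_span_superset: "S \<subseteq> F_span S"
proof
  fix z assume "z \<in> S"
  have "z = (\<Sum>i<Suc 0. smult [:1:] z)"
    by (simp add: one_pCons[symmetric])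
  with \<open>z \<in> S\<close> show "z \<in> F_span S"
    unfolding F_span_def
    by (intro CollectI exI[of _ "Suc 0"] exI[of _ "\<lambda>_. 1"] exI[of _ "\<lambda>_. z"]) simp
qed

lemma F_span_minimal:
  assumes "S \<subseteq> T" and "0 \<in> T" and "\<And>u v. u \<in> T \<Longrightarrow> v \<in> T \<Longrightarrow> u + v \<in> T"
    and "\<And>c u. u \<in> T \<Longrightarrow> smult [:c:] u \<in> T"
  shows "F_span S \<subseteq> T"
proof
  fix z assume "z \<in> F_span S"
  then obtain n c s
    where z: "z = (\<Sum>i<(n::nat). smult [:c i:] (s i))" and s: "\<forall>i<n. s i \<in> S"
    unfolding F_span_def by blast
  have "(\<Sum>i<m. smult [:c i:] (s i)) \<in> T" if "m \<le> n" for m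
    using that by (induct m) (use assms s in \<open>auto intro!: assms(3,4)\<close>)
  then show "z \<in> T"
    using z by blast
qed

theorem lemma2p2:
  fixes h :: "'a::field poly"
  assumes "h \<noteq> 0"
  shows "F_span {ore_comm h (ore_of_poly f) a | f a. True} = {ore_comm h ore_x a | a. True}"
proof
  show "F_span {ore_comm h (ore_of_poly f) a | f a. True} \<subseteq> {ore_comm h ore_x a | a. True}"
  proof (rule F_span_minimal)
    show "{ore_comm h (ore_of_poly f) a | f a. True} \<subseteq> {ore_comm h ore_x a | a. True}"
      using ore_comm_of_poly_eq_comm_x by fastforce
    show "0 \<in> {ore_comm h ore_x a | a. True}"
      by (rule CollectI, rule exI[of _ 0]) (simp add: ore_comm_def)
    show "u + v \<in> {ore_comm h ore_x a | a. True}"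
      if "u \<in> {ore_comm h ore_x a | a. True}" "v \<in> {ore_comm h ore_x a | a. True}" for u v
      using that by (auto simp: ore_comm_add_right[symmetric])
    show "smult [:c:] u \<in> {ore_comm h ore_x a | a. True}"
      if "u \<in> {ore_comm h ore_x a | a. True}" for c u
      using that by (auto simp: ore_x_eq_ore_of_poly ore_comm_of_poly_smult[symmetric])
  qed
  have "{ore_comm h ore_x a | a. True} \<subseteq> {ore_comm h (ore_of_poly f) a | f a. True}"
    by (auto simp: ore_x_eq_ore_of_poly)
  then show "{ore_comm h ore_x a | a. True} \<subseteq> F_span {ore_comm h (ore_of_poly f) a | f a. True}"
    using F_span_superset by blast
qed

end
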